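(* Let $\ell\ge2$ and $\lambda\in\mathcal{C}_\ell$. Define a word $w(\lambda)$ in the letters $s_0,\ldots,s_{\ell-1}$ recursively by $w(\emptyset)=$ the empty word and, for $\lambda\ne\emptyset$, $w(\lambda)=s_i\,w(s_i(\lambda))$, where $i$ is the residue of the rightmost box in the last nonzero row of $\lambda$. Then $w(\lambda)$ is a reduced expression for the minimal length element of $\widetilde{S_\ell}$ indexed by $\lambda$, and its length is \[ l(w(\lambda))=\sum_{i=0}^{\ell-1}\lambda_{R(i)}, \] where $R(i)$ is the longest row of $\lambda$ whose rightmost box has residue $i$ (the term is $0$ if no row of $\lambda$ ends in a box of residue $i$).
   Context: Partitions are in English notation; box $(x,y)$ is in row $x$, column $y$, with residue the least nonnegative integer congruent to $y-x$ mod $\ell$. Hook length of a box: boxes weakly to its right in its row plus boxes strictly below it in its column. $\mathcal{C}_\ell$ is the set of $\ell$-cores (partitions with no hook length divisible by $\ell$). Let $V=\{v\in\mathbf{R}^\ell:\sum v_j=0\}$ and $\Lambda=V\cap\mathbf{Z}^\ell$. For $1\le i\le\ell-1$, $s_i$ acts on $V$ by swapping coordinates $i$ and $i+1$, and $s_0(v_1,\ldots,v_\ell)=(v_\ell+1,v_2,\ldots,v_{\ell-1},v_1-1)$. These generate the affine symmetric group $\widetilde{S_\ell}$, a Coxeter group with Coxeter generators $s_0,\ldots,s_{\ell-1}$ and Coxeter length $l$; it preserves $\Lambda$. For $\mathbf{a}\in\Lambda$ let $X(\mathbf{a})=\{r\ell+(j-1):1\le j\le\ell,\ r\le a_j\}$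 and let $\pi_\ell(\mathbf{a})$ be the partition whose nonzero parts are the positive values of $\#\{y\notin X(\mathbf{a}):y<x\}$ for $x\in X(\mathbf{a})$; $\pi_\ell:\Lambda\to\mathcal{C}_\ell$ is a bijection. For $\lambda\in\mathcal{C}_\ell$, $s_i(\lambda):=\pi_\ell(s_i(\pi_\ell^{-1}(\lambda)))$. The set $\{u\in\widetilde{S_\ell}:u(0)=\pi_\ell^{-1}(\lambda)\}$ is a left coset of $\langle s_1,\ldots,s_{\ell-1}\rangle$, and its unique element of minimal length is the minimal length element indexed by $\lambda$. *)

theory Defs
  imports Complex_Main "HOL-Library.Multiset"
begin

(* Partitions: weakly decreasing lists of positive naturals; row x (1-indexed) has length lam!(x-1). *)
definition is_partition :: "nat list \<Rightarrow> bool" where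
  "is_partition lam \<longleftrightarrow> sorted_wrt (\<ge>) lam \<and> (\<forall>p\<in>set lam. 0 < p)"

definition residue :: "nat \<Rightarrow> nat \<Rightarrow> nat \<Rightarrow> nat" where
  "residue l x y = nat ((int y - int x) mod int l)"

definition hook :: "nat list \<Rightarrow> nat \<Rightarrow> nat \<Rightarrow> nat" where
  "hook lam x y = (lam ! (x - 1) - y + 1)
     + card {x'. x < x' \<and> x' \<le> length lam \<and> y \<le> lam ! (x' - 1)}"

definition is_core :: "nat \<Rightarrow> nat list \<Rightarrow> bool" where
  "is_core l lam \<longleftrightarrow> is_partition lam \<and>
     (\<forall>x y. 1 \<le> x \<and> x \<le> length lam \<and> 1 \<le> y \<and> y \<le> lam ! (x - 1)
        \<longrightarrow> \<not> l dvd hook lam x y)"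

(* Vectors (v_1,...,v_l) are lists of length l (0-indexed). Generators s_0,...,s_{l-1}. *)
definition sgen :: "nat \<Rightarrow> nat \<Rightarrow> 'a::ring_1 list \<Rightarrow> 'a list" where
  "sgen l i v = (if i = 0 then v[0 := v ! (l - 1) + 1, l - 1 := v ! 0 - 1]
                 else v[i - 1 := v ! i, i := v ! (i - 1)])"

(* word [i1,...,ik] represents s_{i1} ... s_{ik} *)
definition act :: "nat \<Rightarrow> nat list \<Rightarrow> 'a::ring_1 list \<Rightarrow> 'a list" where
  "act l w v = foldr (sgen l) w v"

definition is_word :: "nat \<Rightarrow> nat list \<Rightarrow> bool" where
  "is_word l w \<longleftrightarrow> set w \<subseteq> {..<l}"

definition inV :: "nat \<Rightarrow> real list \<Rightarrow> bool" where
  "inV l v \<longleftrightarrow> length v = l \<and> sum_list v = 0"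

definition inLambda :: "nat \<Rightarrow> int list \<Rightarrow> bool" where
  "inLambda l a \<longleftrightarrow> length a = l \<and> sum_list a = 0"

definition same_elem :: "nat \<Rightarrow> nat list \<Rightarrow> nat list \<Rightarrow> bool" where
  "same_elem l w w' \<longleftrightarrow> (\<forall>v. inV l v \<longrightarrow> act l w v = act l w' v)"

definition coxlen :: "nat \<Rightarrow> nat list \<Rightarrow> nat" where
  "coxlen l w = (LEAST n. \<exists>w'. is_word l w' \<and> length w' = n \<and> same_elem l w w')"

definition reduced :: "nat \<Rightarrow> nat list \<Rightarrow> bool" where
  "reduced l w \<longleftrightarrow> is_word l w \<and> length w = coxlen l w"

definition Xset :: "nat \<Rightarrow> int list \<Rightarrow> int set" where
  "Xset l a = {r * int l + int j | r j. j < l \<and> r \<le> a ! j}"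

definition gapcount :: "nat \<Rightarrow> int list \<Rightarrow> int \<Rightarrow> nat" where
  "gapcount l a x = card {y. y \<notin> Xset l a \<and> y < x}"

definition pi_l :: "nat \<Rightarrow> int list \<Rightarrow> nat list" where
  "pi_l l a = (THE lam. is_partition lam \<and>
      (\<forall>n>0. count (mset lam) n = card {x \<in> Xset l a. gapcount l a x = n}))"

definition pi_inv :: "nat \<Rightarrow> nat list \<Rightarrow> int list" where
  "pi_inv l lam = (THE a. inLambda l a \<and> pi_l l a = lam)"

definition score :: "nat \<Rightarrow> nat \<Rightarrow> nat list \<Rightarrow> nat list" where
  "score l i lam = pi_l l (sgen l i (pi_inv l lam))"

definition last_res :: "nat \<Rightarrow> nat list \<Rightarrow> nat" where
  "last_res l lam = residue l (length lam) (last lam)"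

(* the recursively defined word w(lam), as its graph *)
inductive wrel :: "nat \<Rightarrow> nat list \<Rightarrow> nat list \<Rightarrow> bool" for l where
  empty: "wrel l [] []"
| step: "lam \<noteq> [] \<Longrightarrow> i = last_res l lam \<Longrightarrow> wrel l (score l i lam) w
           \<Longrightarrow> wrel l lam (i # w)"

definition in_coset :: "nat \<Rightarrow> nat list \<Rightarrow> nat list \<Rightarrow> bool" where
  "in_coset l lam w \<longleftrightarrow> is_word l w \<and>
     act l w (replicate l (0::real)) = map real_of_int (pi_inv l lam)"

definition is_min_elem :: "nat \<Rightarrow> nat list \<Rightarrow> nat list \<Rightarrow> bool" where
  "is_min_elem l lam w \<longleftrightarrow> in_coset l lam w \<and>
     (\<forall>w'. in_coset l lam w' \<and> \<not> same_elem l w w' \<longrightarrow> coxlen l w < coxlen l w')"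

definition Rlen :: "nat \<Rightarrow> nat list \<Rightarrow> nat \<Rightarrow> nat" where
  "Rlen l lam i = Max (insert 0 {lam ! (x - 1) | x. 1 \<le> x \<and> x \<le> length lam
                        \<and> residue l x (lam ! (x - 1)) = i})"

end

theory Submission
  imports Defs
begin

text \<open>Let \<open>x\<^sub>0\<close> be a point of the fundamental alcove.  The Coxeter length of \<open>u\<close> is at least the
  number of hyperplanes \<open>x\<^sub>p - x\<^sub>q = k\<close> separating \<open>u(x\<^sub>0)\<close> from the alcove, since a generator
  changes this count by at most one.  For \<open>u(0) = a\<close> this count is minimal, equal to the count
  for \<open>a\<close> itself, exactly when \<open>u\<close> permutes coordinates in the order of the entries of \<open>a\<close>,
  which pins down \<open>u\<close>.  On the abacus of \<open>\<lambda> = \<pi>\<^sub>\<ell>(a)\<close>, the letter \<open>s\<^sub>i\<close> with \<open>i\<close> the residue of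
  the last row lowers the count for \<open>a\<close> by exactly one, so the word \<open>w(\<lambda>)\<close> attains the bound
  and is a reduced word for the minimal element.  Finally \<open>\<lambda>\<^sub>R\<^sub>(\<^sub>i\<^sub>)\<close> is the number of gaps
  preceding the last bead on runner \<open>i\<close>, and summing over \<open>i\<close> recovers the count for \<open>a\<close>.\<close>

section \<open>The generators as affine maps\<close>

definition gen_perm :: "nat \<Rightarrow> nat \<Rightarrow> nat \<Rightarrow> nat" where
  "gen_perm l i k = (if i = 0 then (if k = 0 then l - 1 else if k = l - 1 then 0 else k)
                     else (if k = i - 1 then i else if k = i then i - 1 else k))"

definition gen_shift :: "nat \<Rightarrow> nat \<Rightarrow> nat \<Rightarrow> 'a::ring_1" where
  "gen_shift l i k = (if i = 0 then (if k = 0 then 1 else if k = l - 1 then - 1 else 0) else 0)"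

lemma sgen_length [simp]: "length (sgen l i v) = length v"
  by (simp add: sgen_def)

lemma sgen_nth:
  assumes "2 \<le> l" "i < l" "length v = l" "k < l"
  shows "sgen l i v ! k = v ! gen_perm l i k + gen_shift l i k"
  using assms by (auto simp: sgen_def gen_perm_def gen_shift_def nth_list_update)

lemma gen_perm_less: "2 \<le> l \<Longrightarrow> i < l \<Longrightarrow> k < l \<Longrightarrow> gen_perm l i k < l"
  by (auto simp: gen_perm_def)

lemma gen_perm_gen_perm: "2 \<le> l \<Longrightarrow> i < l \<Longrightarrow> k < l \<Longrightarrow> gen_perm l i (gen_perm l i k) = k"
  by (auto simp: gen_perm_def)

lemma bij_betw_gen_perm: "2 \<le> l \<Longrightarrow> i < l \<Longrightarrow> bij_betw (gen_perm l i) {..<l} {..<l}"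
  by (rule bij_betw_byWitness[where f' = "gen_perm l i"]) (auto simp: gen_perm_gen_perm gen_perm_less)

lemma sgen_sgen:
  assumes "2 \<le> l" "i < l" "length v = l"
  shows "sgen l i (sgen l i v) = (v :: 'a::ring_1 list)"
  by (rule nth_equalityI) (use assms in \<open>auto simp: sgen_def nth_list_update\<close>)

lemma map_of_int_sgen:
  assumes "2 \<le> l" "i < l" "length a = l"
  shows "map of_int (sgen l i a) = (sgen l i (map of_int a) :: 'a::ring_1 list)"
  using assms by (auto simp: sgen_def map_update)

lemma sum_list_list_update:
  fixes xs :: "'a::ab_group_add list"
  shows "k < length xs \<Longrightarrow> sum_list (xs[k := x]) = sum_list xs + x - xs ! k"
  by (induction xs arbitrary: k) (auto simp: algebra_simps split: nat.split)

lemma inLambda_sgen: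
  assumes "2 \<le> l" "i < l" "inLambda l a"
  shows "inLambda l (sgen l i a)"
  using assms by (auto simp: inLambda_def sgen_def sum_list_list_update nth_list_update)

lemma act_Nil [simp]: "act l [] v = v"
  by (simp add: act_def)

lemma act_Cons [simp]: "act l (i # w) v = sgen l i (act l w v)"
  by (simp add: act_def)

lemma act_length [simp]: "length (act l w v) = length v"
  by (induction w) auto

lemma act_affine:
  assumes "is_word l w" "2 \<le> l"
  obtains \<sigma> where "bij_betw \<sigma> {..<l} {..<l}"
    "\<And>v k. length (v :: real list) = l \<Longrightarrow> k < l \<Longrightarrow> act l w v ! k = v ! \<sigma> k + act l w (replicate l 0) ! k"
proof -
  have "\<exists>\<sigma>. bij_betw \<sigma> {..<l} {..<l} \<and> (\<forall>v::real list. length v = l \<longrightarrow>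
          (\<forall>k<l. act l w v ! k = v ! \<sigma> k + act l w (replicate l 0) ! k))"
    using assms(1)
  proof (induction w)
    case Nil
    show ?case by (intro exI[of _ id]) (auto simp: bij_betw_def)
  next
    case (Cons i w)
    then have i: "i < l" and "is_word l w" by (auto simp: is_word_def)
    with Cons.IH obtain \<sigma> where bij: "bij_betw \<sigma> {..<l} {..<l}"
      and IH: "\<forall>v::real list. length v = l \<longrightarrow> (\<forall>k<l. act l w v ! k = v ! \<sigma> k + act l w (replicate l 0) ! k)"
      by blast
    have "act l (i # w) v ! k = v ! (\<sigma> \<circ> gen_perm l i) k + act l (i # w) (replicate l 0) ! k"
      if v: "length (v :: real list) = l" and k: "k < l" for v k
    proof -
      have "act l (i # w) v ! k = act l w v ! gen_perm l i k + gen_shift l i k"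
        using sgen_nth[OF assms(2) i _ k, of "act l w v"] v by simp
      moreover have "act l (i # w) (replicate l (0::real)) ! k
          = act l w (replicate l 0) ! gen_perm l i k + gen_shift l i k"
        using sgen_nth[OF assms(2) i _ k, of "act l w (replicate l 0)"] by simp
      moreover have "act l w v ! gen_perm l i k
          = v ! \<sigma> (gen_perm l i k) + act l w (replicate l 0) ! gen_perm l i k"
        using IH v gen_perm_less[OF assms(2) i k] by blast
      ultimately show ?thesis by simp
    qed
    with bij_betw_trans[OF bij_betw_gen_perm[OF assms(2) i] bij] show ?case by blast
  qed
  with that show ?thesis by blast
qed

section \<open>Separating walls\<close>

definition index_pairs :: "nat \<Rightarrow> (nat \<times> nat) set" where
  "index_pairs l = {(p, q). p < q \<and> q < l}"

lemma finite_index_pairs [simp]: "finite (index_pairs l)"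
  by (rule finite_subset[of _ "{..<l} \<times> {..<l}"]) (auto simp: index_pairs_def)

text \<open>\<open>wall_count t\<close> is the number of integers strictly separating \<open>t\<close> from the open
  interval \<open>(0, 1)\<close>, so \<open>separating_walls l v\<close> counts the hyperplanes
  \<open>x\<^sub>p - x\<^sub>q = k\<close> separating \<open>v\<close> from the fundamental alcove.\<close>

definition wall_count :: "real \<Rightarrow> int" where
  "wall_count t = max (\<lceil>t\<rceil> - 1) (- \<lfloor>t\<rfloor>)"

definition separating_walls :: "nat \<Rightarrow> real list \<Rightarrow> int" where
  "separating_walls l v = (\<Sum>(p, q)\<in>index_pairs l. wall_count (v ! p - v ! q))"

lemma wall_count_of_int [simp]: "wall_count (of_int n) = max (n - 1) (- n)"
  by (simp add: wall_count_def)

lemma wall_count_of_int_add: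
  assumes "0 < d" "d < 1"
  shows "wall_count (of_int n + d) = max n (- n)"
proof -
  have "\<lfloor>of_int n + d\<rfloor> = n" "\<lceil>of_int n + d\<rceil> = n + 1"
    using assms by (auto intro: floor_unique ceiling_unique)
  then show ?thesis by (simp add: wall_count_def)
qed

lemma int_or_frac_cases:
  fixes t :: real
  obtains n where "t = of_int n" | n d where "t = of_int n + d" "0 < d" "d < 1"
proof (cases "t = of_int \<lfloor>t\<rfloor>")
  case False
  then have "0 < t - of_int \<lfloor>t\<rfloor>" using of_int_floor_le[of t] by linarith
  with that(2)[of "\<lfloor>t\<rfloor>" "t - of_int \<lfloor>t\<rfloor>"] show ?thesis by linarith
qed (use that(1) in blast)

lemma wall_count_nonneg: "0 \<le> wall_count t"
  by (cases t rule: int_or_frac_cases) (auto simp: wall_count_of_int_add)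

lemma wall_count_one_minus: "wall_count (1 - t) = wall_count t"
proof (cases t rule: int_or_frac_cases)
  case (1 n)
  then have "1 - t = of_int (1 - n)" by simp
  then show ?thesis using 1 by (simp only: wall_count_of_int)
next
  case (2 n d)
  then have "wall_count (1 - t) = wall_count (of_int (- n) + (1 - d))" by (simp add: algebra_simps)
  also have "\<dots> = wall_count t"
    using 2 wall_count_of_int_add[of "1 - d" "- n"] wall_count_of_int_add[of d n] by (simp add: max.commute)
  finally show ?thesis .
qed

lemma wall_count_minus_le: "wall_count (- t) \<le> wall_count t + 1"
proof (cases t rule: int_or_frac_cases)
  case (1 n)
  then have "- t = of_int (- n)" by simp
  then show ?thesis using 1 by (simp only: wall_count_of_int)
next
  case (2 n d)
  then have "wall_count (- t) = wall_count (of_int (- n - 1) + (1 - d))" by (simp add: algebra_simps)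
  also have "\<dots> = max (- n - 1) (n + 1)" using 2 wall_count_of_int_add[of "1 - d" "- n - 1"] by simp
  finally show ?thesis using 2 by (simp add: wall_count_of_int_add)
qed

lemma separating_walls_exchange:
  assumes mem: "(p\<^sub>0, q\<^sub>0) \<in> index_pairs l"
    and bij: "bij_betw \<phi> (index_pairs l - {(p\<^sub>0, q\<^sub>0)}) (index_pairs l - {(p\<^sub>0, q\<^sub>0)})"
    and walls: "\<And>x. x \<in> index_pairs l - {(p\<^sub>0, q\<^sub>0)} \<Longrightarrow>
      wall_count (u ! fst x - u ! snd x) = wall_count (v ! fst (\<phi> x) - v ! snd (\<phi> x))"
  shows "separating_walls l u
    = separating_walls l v - wall_count (v ! p\<^sub>0 - v ! q\<^sub>0) + wall_count (u ! p\<^sub>0 - u ! q\<^sub>0)"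
proof -
  let ?P = "index_pairs l - {(p\<^sub>0, q\<^sub>0)}"
  define g where "g w x = wall_count (w ! fst x - w ! snd x)" for w :: "real list" and x
  have split: "separating_walls l w = g w (p\<^sub>0, q\<^sub>0) + sum (g w) ?P" for w
    unfolding separating_walls_def g_def split_beta by (rule sum.remove[OF finite_index_pairs mem])
  have "sum (g u) ?P = sum (\<lambda>x. g v (\<phi> x)) ?P"
    using walls by (intro sum.cong) (auto simp: g_def)
  also have "\<dots> = sum (g v) ?P"
    by (rule sum.reindex_bij_betw[OF bij])
  finally show ?thesis
    using split[of u] split[of v] by (simp add: g_def)
qed

lemma separating_walls_sgen_Suc:
  assumes l: "2 \<le> l" and i: "0 < i" "i < l" and v: "length v = l"
  shows "separating_walls l (sgen l i v)
    = separating_walls l v - wall_count (v ! (i - 1) - v ! i) + wall_count (v ! i - v ! (i - 1))"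
proof -
  have sv: "sgen l i v ! k = v ! gen_perm l i k" if "k < l" for k
    using sgen_nth[OF l \<open>i < l\<close> v that] i by (simp add: gen_shift_def)
  let ?P = "index_pairs l - {(i - 1, i)}"
  have bij: "bij_betw (map_prod (gen_perm l i) (gen_perm l i)) ?P ?P"
    by (rule bij_betw_byWitness[where f' = "map_prod (gen_perm l i) (gen_perm l i)"])
      (use i in \<open>auto simp: index_pairs_def gen_perm_def split: if_splits\<close>)
  have mem: "(i - 1, i) \<in> index_pairs l"
    using i by (simp add: index_pairs_def)
  have "separating_walls l (sgen l i v) = separating_walls l v
      - wall_count (v ! (i - 1) - v ! i) + wall_count (sgen l i v ! (i - 1) - sgen l i v ! i)"
    by (rule separating_walls_exchange[OF mem bij]) (auto simp: index_pairs_def sv)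
  then show ?thesis
    using i sv[of i] sv[of "i - 1"] by (simp add: gen_perm_def)
qed

lemma separating_walls_sgen_0:
  assumes l: "2 \<le> l" and v: "length v = l"
  shows "separating_walls l (sgen l 0 v)
    = separating_walls l v - wall_count (v ! 0 - v ! (l - 1)) + wall_count (v ! (l - 1) - v ! 0 + 2)"
proof -
  have sv: "sgen l 0 v ! k = v ! gen_perm l 0 k + gen_shift l 0 k" if "k < l" for k
    using sgen_nth[OF l _ v that] l by simp
  let ?P = "index_pairs l - {(0, l - 1)}"
  \<comment> \<open>\<open>s\<^sub>0\<close> exchanges the walls of the pairs \<open>(0, q)\<close> and \<open>(q, l - 1)\<close>, reflecting \<open>t\<close> to \<open>1 - t\<close>\<close>
  define \<phi> where "\<phi> = (\<lambda>(p, q). if p = 0 then (q, l - 1) else if q = l - 1 then (0, p) else (p, q))"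
  have bij: "bij_betw \<phi> ?P ?P"
    by (rule bij_betw_byWitness[where f' = \<phi>]) (use l in \<open>auto simp: \<phi>_def index_pairs_def split: if_splits\<close>)
  have mem: "(0, l - 1) \<in> index_pairs l"
    using l by (simp add: index_pairs_def)
  have walls: "wall_count (sgen l 0 v ! fst x - sgen l 0 v ! snd x) = wall_count (v ! fst (\<phi> x) - v ! snd (\<phi> x))"
    if "x \<in> ?P" for x
  proof -
    obtain p q where x: "x = (p, q)"
      by fastforce
    have pq: "p < q" "q < l" "(p, q) \<noteq> (0, l - 1)"
      using that by (auto simp: index_pairs_def x)
    consider "p = 0" | "p \<noteq> 0" "q = l - 1" | "p \<noteq> 0" "q \<noteq> l - 1"
      by blast
    then show ?thesis
    proof cases
      case 1
      then have "sgen l 0 v ! p - sgen l 0 v ! q = 1 - (v ! q - v ! (l - 1))"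
        using pq sv[of p] sv[of q] by (simp add: gen_perm_def gen_shift_def)
      then show ?thesis using 1 pq by (simp add: x \<phi>_def wall_count_one_minus)
    next
      case 2
      then have "sgen l 0 v ! p - sgen l 0 v ! q = 1 - (v ! 0 - v ! p)"
        using pq sv[of p] sv[of q] by (simp add: gen_perm_def gen_shift_def)
      then show ?thesis using 2 by (simp add: x \<phi>_def wall_count_one_minus)
    next
      case 3
      moreover have "p \<noteq> l - 1"
        using pq by linarith
      ultimately show ?thesis
        using pq sv[of p] sv[of q] by (simp add: x \<phi>_def gen_perm_def gen_shift_def)
    qed
  qed
  have "separating_walls l (sgen l 0 v) = separating_walls l v
      - wall_count (v ! 0 - v ! (l - 1)) + wall_count (sgen l 0 v ! 0 - sgen l 0 v ! (l - 1))"
    by (rule separating_walls_exchange[OF mem bij walls])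
  then show ?thesis
    using l sv[of 0] sv[of "l - 1"] by (simp add: gen_perm_def gen_shift_def add.commute)
qed

lemma separating_walls_sgen_le:
  assumes l: "2 \<le> l" and i: "i < l" and v: "length v = l"
  shows "separating_walls l (sgen l i v) \<le> separating_walls l v + 1"
proof (cases "i = 0")
  case True
  let ?t = "v ! (l - 1) - v ! 0 + 1"
  have "wall_count (v ! (l - 1) - v ! 0 + 2) = wall_count (- ?t)"
    using wall_count_one_minus[of "?t + 1"] by (simp add: algebra_simps)
  moreover have "wall_count (v ! 0 - v ! (l - 1)) = wall_count ?t"
    using wall_count_one_minus[of ?t] by (simp add: algebra_simps)
  ultimately show ?thesis
    using separating_walls_sgen_0[OF l v] wall_count_minus_le[of ?t] True by simp
next
  case False
  then show ?thesis
    using separating_walls_sgen_Suc[OF l _ i v] wall_count_minus_le[of "v ! (i - 1) - v ! i"]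
    by simp
qed

lemma separating_walls_act_le:
  assumes l: "2 \<le> l" and w: "is_word l w" and v: "length v = l"
  shows "separating_walls l (act l w v) \<le> separating_walls l v + int (length w)"
  using w
proof (induction w)
  case (Cons i w)
  then have "i < l" "is_word l w"
    by (auto simp: is_word_def)
  with Cons.IH separating_walls_sgen_le[OF l, of i "act l w v"] v show ?case
    by simp
qed simp

lemma separating_walls_nonneg: "0 \<le> separating_walls l v"
  unfolding separating_walls_def by (rule sum_nonneg) (auto simp: wall_count_nonneg)

lemma separating_walls_replicate_0: "separating_walls l (replicate l 0) = 0"
  unfolding separating_walls_def by (intro sum.neutral) (auto simp: index_pairs_def wall_count_def)

lemma coxlen_le_length: "is_word l w \<Longrightarrow> coxlen l w \<le> length w"
  unfolding coxlen_def by (rule Least_le) (auto simp: same_elem_def)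

lemma coxlen_witness:
  assumes "is_word l w"
  obtains w' where "is_word l w'" "length w' = coxlen l w" "same_elem l w w'"
proof -
  have "\<exists>w'. is_word l w' \<and> length w' = coxlen l w \<and> same_elem l w w'"
    unfolding coxlen_def by (rule LeastI_ex) (use assms in \<open>auto simp: same_elem_def\<close>)
  with that show ?thesis by blast
qed

lemma separating_walls_act_le_coxlen:
  assumes l: "2 \<le> l" and w: "is_word l w" and v: "inV l v"
  shows "separating_walls l (act l w v) \<le> separating_walls l v + int (coxlen l w)"
proof -
  obtain w' where w': "is_word l w'" "length w' = coxlen l w" "same_elem l w w'"
    using coxlen_witness[OF w] by blast
  then have "act l w v = act l w' v"
    using v by (simp add: same_elem_def)
  with separating_walls_act_le[OF l w'(1)] v w'(2) show ?thesis
    by (simp add: inV_def)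
qed

definition alcove_point :: "nat \<Rightarrow> real list" where
  "alcove_point l = map (\<lambda>k. (real l - 1 - 2 * real k) / (2 * real l)) [0..<l]"

lemma length_alcove_point [simp]: "length (alcove_point l) = l"
  by (simp add: alcove_point_def)

lemma alcove_point_diff:
  "p < l \<Longrightarrow> q < l \<Longrightarrow> alcove_point l ! p - alcove_point l ! q = (real q - real p) / real l"
  by (simp add: alcove_point_def field_simps)

lemma inV_alcove_point: "inV l (alcove_point l)"
proof -
  have "(\<Sum>k<l. 2 * real k) = real l * (real l - 1)"
    by (induction l) (auto simp: algebra_simps)
  then have "(\<Sum>k<l. real l - 1 - 2 * real k) = 0"
    by (simp add: sum_subtractf)
  then have "(\<Sum>k<l. (real l - 1 - 2 * real k) / (2 * real l)) = 0"
    by (simp add: sum_divide_distrib[symmetric])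
  then show ?thesis
    by (simp add: inV_def alcove_point_def sum_list_sum_nth atLeast0LessThan)
qed

lemma separating_walls_alcove_point: "separating_walls l (alcove_point l) = 0"
  unfolding separating_walls_def
proof (intro sum.neutral ballI)
  fix x assume "x \<in> index_pairs l"
  then obtain p q where x: "x = (p, q)" "p < q" "q < l"
    by (auto simp: index_pairs_def)
  then have "wall_count (of_int 0 + (real q - real p) / real l) = 0"
    by (subst wall_count_of_int_add) (auto simp: field_simps)
  with x show "(case x of (p, q) \<Rightarrow> wall_count (alcove_point l ! p - alcove_point l ! q)) = 0"
    by (simp add: alcove_point_diff)
qed

lemma wall_count_of_int_le_add:
  assumes "0 < \<bar>d\<bar>" "\<bar>d\<bar> < 1"
  shows "wall_count (of_int n) \<le> wall_count (of_int n + d)"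
    and "wall_count (of_int n) = wall_count (of_int n + d) \<Longrightarrow> 0 < d \<longleftrightarrow> n \<le> 0"
proof -
  have "wall_count (of_int n + d) = (if 0 < d then max n (- n) else max (n - 1) (1 - n))"
  proof (cases "0 < d")
    case False
    have "of_int n + d = of_int (n - 1) + (1 + d)"
      by simp
    then show ?thesis
      using False assms wall_count_of_int_add[of "1 + d" "n - 1"] by simp
  qed (use assms wall_count_of_int_add in simp)
  then show "wall_count (of_int n) \<le> wall_count (of_int n + d)"
    and "wall_count (of_int n) = wall_count (of_int n + d) \<Longrightarrow> 0 < d \<longleftrightarrow> n \<le> 0"
    by (auto split: if_splits)
qed

lemma separating_walls_perturbed:
  fixes a :: "int list" and x :: "real list"
  assumes la: "length a = l" and bij: "bij_betw \<sigma> {..<l} {..<l}"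
    and x: "\<And>k. k < l \<Longrightarrow> x ! k = of_int (a ! k) + alcove_point l ! \<sigma> k"
  shows "separating_walls l (map of_int a) \<le> separating_walls l x"
    and "separating_walls l x = separating_walls l (map of_int a) \<Longrightarrow> p < q \<Longrightarrow> q < l
      \<Longrightarrow> \<sigma> p < \<sigma> q \<longleftrightarrow> a ! p \<le> a ! q"
proof -
  define f where "f y = (case y of (p, q) \<Rightarrow> wall_count (of_int (a ! p - a ! q)))" for y
  define g where "g y = (case y of (p, q) \<Rightarrow> wall_count (x ! p - x ! q))" for y
  have pair: "f (p, q) \<le> g (p, q) \<and> (f (p, q) = g (p, q) \<longrightarrow> (\<sigma> p < \<sigma> q \<longleftrightarrow> a ! p \<le> a ! q))"
    if "(p, q) \<in> index_pairs l" for p q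
  proof -
    have pq: "p < q" "q < l"
      using that by (auto simp: index_pairs_def)
    define d where "d = (real (\<sigma> q) - real (\<sigma> p)) / real l"
    have "\<sigma> p \<noteq> \<sigma> q" "\<sigma> p < l" "\<sigma> q < l"
      using bij pq by (auto simp: bij_betw_def inj_on_def)
    then have d: "0 < \<bar>d\<bar>" "\<bar>d\<bar> < 1" "0 < d \<longleftrightarrow> \<sigma> p < \<sigma> q"
      by (auto simp: d_def field_simps abs_if)
    have "x ! p - x ! q = of_int (a ! p - a ! q) + d"
      using x pq alcove_point_diff[of "\<sigma> p" l "\<sigma> q"] \<open>\<sigma> p < l\<close> \<open>\<sigma> q < l\<close> by (simp add: d_def)
    then show ?thesis
      using wall_count_of_int_le_add[OF d(1,2), of "a ! p - a ! q"] d(3)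
      by (auto simp: f_def g_def)
  qed
  have walls_a: "separating_walls l (map of_int a) = sum f (index_pairs l)"
    unfolding separating_walls_def f_def using la by (intro sum.cong) (auto simp: index_pairs_def)
  have walls_x: "separating_walls l x = sum g (index_pairs l)"
    by (simp add: separating_walls_def g_def)
  show "separating_walls l (map of_int a) \<le> separating_walls l x"
    unfolding walls_a walls_x using pair by (intro sum_mono) fastforce
  assume eq: "separating_walls l x = separating_walls l (map of_int a)" and pq: "p < q" "q < l"
  then have mem: "(p, q) \<in> index_pairs l"
    by (simp add: index_pairs_def)
  have "f (p, q) = g (p, q)"
  proof (rule ccontr)
    assume "f (p, q) \<noteq> g (p, q)"
    then have "f (p, q) < g (p, q)"
      using pair[OF mem] by simp
    moreover have "\<forall>y\<in>index_pairs l. f y \<le> g y"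
      using pair by fastforce
    ultimately have "sum f (index_pairs l) < sum g (index_pairs l)"
      using mem by (intro sum_strict_mono_ex1) auto
    with eq show False
      unfolding walls_a walls_x by simp
  qed
  with pair[OF mem] show "\<sigma> p < \<sigma> q \<longleftrightarrow> a ! p \<le> a ! q"
    by blast
qed

lemma card_less_bij_betw:
  assumes bij: "bij_betw \<sigma> {..<l} {..<l}" and k: "k < l"
  shows "card {j. j < l \<and> \<sigma> j < \<sigma> k} = \<sigma> k"
proof -
  have inj: "inj_on \<sigma> {j. j < l \<and> \<sigma> j < \<sigma> k}"
    using bij by (rule inj_on_subset[OF bij_betw_imp_inj_on]) auto
  have "\<sigma> k < l"
    using bij k by (auto simp: bij_betw_def)
  have "{..<\<sigma> k} \<subseteq> \<sigma> ` {j. j < l \<and> \<sigma> j < \<sigma> k}"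
  proof
    fix m assume m: "m \<in> {..<\<sigma> k}"
    then have "m \<in> \<sigma> ` {..<l}"
      using bij \<open>\<sigma> k < l\<close> by (simp add: bij_betw_def)
    with m show "m \<in> \<sigma> ` {j. j < l \<and> \<sigma> j < \<sigma> k}"
      by auto
  qed
  then have "\<sigma> ` {j. j < l \<and> \<sigma> j < \<sigma> k} = {..<\<sigma> k}"
    by fastforce
  with card_image[OF inj] show ?thesis
    by simp
qed

lemma bij_betw_eq_if_same_order:
  fixes \<sigma> \<sigma>' :: "nat \<Rightarrow> nat"
  assumes bij: "bij_betw \<sigma> {..<l} {..<l}" "bij_betw \<sigma>' {..<l} {..<l}"
    and order: "\<And>p q. p < q \<Longrightarrow> q < l \<Longrightarrow> \<sigma> p < \<sigma> q \<longleftrightarrow> \<sigma>' p < \<sigma>' q"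
    and k: "k < l"
  shows "\<sigma> k = \<sigma>' k"
proof -
  have inj: "inj_on \<sigma> {..<l}" "inj_on \<sigma>' {..<l}"
    using bij by (auto simp: bij_betw_def)
  have "\<sigma> j < \<sigma> k \<longleftrightarrow> \<sigma>' j < \<sigma>' k" if j: "j < l" for j
  proof (cases j k rule: linorder_cases)
    case greater
    have "\<sigma> j \<noteq> \<sigma> k" "\<sigma>' j \<noteq> \<sigma>' k"
      using inj_onD[OF inj(1), of j k] inj_onD[OF inj(2), of j k] j k greater by auto
    with order[OF greater j] show ?thesis
      by auto
  qed (use order k in auto)
  then have "{j. j < l \<and> \<sigma> j < \<sigma> k} = {j. j < l \<and> \<sigma>' j < \<sigma>' k}"
    by blast
  with card_less_bij_betw[OF bij(1) k] card_less_bij_betw[OF bij(2) k] show ?thesis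
    by simp
qed

section \<open>Beta-sets and the abacus\<close>

lemma div_mod_linear:
  fixes R j :: int
  assumes "0 \<le> j" "j < int l"
  shows "(R * int l + j) div int l = R" "(R * int l + j) mod int l = j"
proof -
  have "(j + R * int l) div int l = j div int l + R"
    using assms by simp
  then show "(R * int l + j) div int l = R"
    using assms by (simp add: div_pos_pos_trivial add.commute)
  have "(j + R * int l) mod int l = j mod int l"
    by simp
  then show "(R * int l + j) mod int l = j"
    using assms by (simp add: mod_pos_pos_trivial add.commute)
qed

lemma linear_inj:
  assumes j: "j < l" "j' < l" and eq: "R * int l + int j = R' * int l + int j'"
  shows "R = R'" "j = j'"
proof -
  have "R = (R * int l + int j) div int l"
    using div_mod_linear(1)[of "int j" l R] j by simp
  also have "\<dots> = R'"
    unfolding eq using div_mod_linear(1)[of "int j'" l R'] j by simp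
  finally show "R = R'" .
  have "int j = (R * int l + int j) mod int l"
    using div_mod_linear(2)[of "int j" l R] j by simp
  also have "\<dots> = int j'"
    unfolding eq using div_mod_linear(2)[of "int j'" l R'] j by simp
  finally show "j = j'"
    by simp
qed

lemma mem_Xset_iff:
  assumes "j < l"
  shows "R * int l + int j \<in> Xset l a \<longleftrightarrow> R \<le> a ! j"
proof
  assume "R * int l + int j \<in> Xset l a"
  then obtain r j' where "R * int l + int j = r * int l + int j'" "j' < l" "r \<le> a ! j'"
    unfolding Xset_def by blast
  with linear_inj[OF assms] show "R \<le> a ! j"
    by metis
qed (use assms in \<open>auto simp: Xset_def\<close>)

lemma mem_Xset_iff_div:
  assumes "0 < l"
  shows "y \<in> Xset l a \<longleftrightarrow> y div int l \<le> a ! nat (y mod int l)"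
proof -
  have "y = y div int l * int l + int (nat (y mod int l))"
    using assms by simp
  moreover have "nat (y mod int l) < l"
    using assms by (simp add: nat_less_iff)
  ultimately show ?thesis
    by (metis mem_Xset_iff)
qed

text \<open>\<open>beta c lam k\<close> is the beta number \<open>\<lambda>\<^sub>k\<^sub>+\<^sub>1 - (k+1) + c\<close> of row \<open>k + 1\<close> with charge \<open>c\<close>, and
  \<open>beta_set c lam\<close> also contains those of the empty rows.  The parts of \<open>lam\<close> are the gap counts
  below its beta numbers, which is how \<open>pi_l l a\<close> reads a partition off \<open>Xset l a\<close>.\<close>

definition beta :: "int \<Rightarrow> nat list \<Rightarrow> nat \<Rightarrow> int" where
  "beta c lam k = int (lam ! k) - int k - 1 + c"

definition beta_set :: "int \<Rightarrow> nat list \<Rightarrow> int set" where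
  "beta_set c lam = beta c lam ` {..<length lam} \<union> {.. c - int (length lam) - 1}"

definition gaps_below :: "int set \<Rightarrow> int \<Rightarrow> nat" where
  "gaps_below S x = card {y. y \<notin> S \<and> y < x}"

lemma gapcount_eq_gaps_below: "gapcount l a x = gaps_below (Xset l a) x"
  by (simp add: gapcount_def gaps_below_def)

lemma is_partition_nth_antimono:
  "is_partition lam \<Longrightarrow> k \<le> k' \<Longrightarrow> k' < length lam \<Longrightarrow> lam ! k' \<le> lam ! k"
  unfolding is_partition_def by (metis le_eq_less_or_eq sorted_wrt_nth_less)

lemma is_partition_nth_pos: "is_partition lam \<Longrightarrow> k < length lam \<Longrightarrow> 0 < lam ! k"
  unfolding is_partition_def by auto

lemma beta_add_antimono:
  "is_partition lam \<Longrightarrow> k \<le> k' \<Longrightarrow> k' < length lam \<Longrightarrow> beta c lam k' + int k' \<le> beta c lam k + int k"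
  using is_partition_nth_antimono[of lam k k'] by (simp add: beta_def)

lemma beta_strict_antimono:
  "is_partition lam \<Longrightarrow> k < k' \<Longrightarrow> k' < length lam \<Longrightarrow> beta c lam k' < beta c lam k"
  using beta_add_antimono[of lam k k' c] by simp

lemma beta_lower: "is_partition lam \<Longrightarrow> k < length lam \<Longrightarrow> c - int k \<le> beta c lam k"
  using is_partition_nth_pos[of lam k] by (simp add: beta_def)

lemma inj_on_beta: "is_partition lam \<Longrightarrow> inj_on (beta c lam) {..<length lam}"
  unfolding inj_on_def by (metis lessThan_iff linorder_neqE_nat less_irrefl beta_strict_antimono)

lemma beta_set_cases:
  assumes "y \<in> beta_set c lam"
  obtains "y \<le> c - int (length lam) - 1" | k where "k < length lam" "y = beta c lam k"
  using assms unfolding beta_set_def by auto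

lemma gaps_below_beta_set_eq_0:
  "y \<le> c - int (length lam) - 1 \<Longrightarrow> gaps_below (beta_set c lam) y = 0"
proof -
  assume "y \<le> c - int (length lam) - 1"
  then have "{z. z \<notin> beta_set c lam \<and> z < y} = {}"
    by (auto simp: beta_set_def)
  then show ?thesis
    unfolding gaps_below_def by (metis card.empty)
qed

lemma gaps_below_beta:
  assumes p: "is_partition lam" and k: "k < length lam"
  shows "gaps_below (beta_set c lam) (beta c lam k) = lam ! k"
proof -
  let ?n = "length lam"
  let ?A = "{c - int ?n ..< beta c lam k}"
  let ?I = "beta c lam ` {k<..<?n}"
  have "{y. y \<notin> beta_set c lam \<and> y < beta c lam k} = ?A - ?I"
  proof (intro set_eqI iffI)
    fix y assume y: "y \<in> ?A - ?I"
    have "y \<noteq> beta c lam k'" if "k' < ?n" for k'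
    proof (cases "k' \<le> k")
      case True
      then show ?thesis
        using y beta_add_antimono[OF p True k, of c] by auto
    qed (use y that in auto)
    with y show "y \<in> {y. y \<notin> beta_set c lam \<and> y < beta c lam k}"
      by (auto simp: beta_set_def)
  qed (auto simp: beta_set_def)
  moreover have "?I \<subseteq> ?A"
  proof
    fix y assume "y \<in> ?I"
    then obtain k' where k': "k < k'" "k' < ?n" "y = beta c lam k'"
      by auto
    with beta_strict_antimono[OF p k'(1,2), of c] beta_lower[OF p k'(2), of c] show "y \<in> ?A"
      by auto
  qed
  moreover have "inj_on (beta c lam) {k<..<?n}"
    using inj_on_beta[OF p] by (rule inj_on_subset) auto
  then have "card ?I = ?n - k - 1"
    by (simp add: card_image)
  ultimately have "gaps_below (beta_set c lam) (beta c lam k) = card ?A - (?n - k - 1)"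
    unfolding gaps_below_def by (simp add: card_Diff_subset)
  then show ?thesis
    using k by (simp add: beta_def)
qed

lemma gaps_below_beta_set_mono:
  assumes "x \<le> x'"
  shows "gaps_below (beta_set c lam) x \<le> gaps_below (beta_set c lam) x'"
  unfolding gaps_below_def
proof (rule card_mono)
  show "finite {y. y \<notin> beta_set c lam \<and> y < x'}"
    by (rule finite_subset[of _ "{c - int (length lam) ..< x'}"]) (auto simp: beta_set_def)
qed (use assms in auto)

lemma count_mset_eq_card: "count (mset xs) m = card {i. i < length xs \<and> xs ! i = m}"
  by (simp add: count_mset count_list_eq_length_filter length_filter_conv_card eq_commute)

lemma is_partition_eqI:
  assumes "is_partition xs" "is_partition ys" "\<And>m. 0 < m \<Longrightarrow> count (mset xs) m = count (mset ys) m"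
  shows "xs = ys"
proof -
  have "0 \<notin> set xs" "0 \<notin> set ys"
    using assms(1,2) unfolding is_partition_def by auto
  then have "mset xs = mset ys"
    using assms(3) by (intro multiset_eqI) (metis count_mset_0_iff gr0I)
  moreover have "sorted (rev xs)" "sorted (rev ys)"
    using assms(1,2) by (simp_all add: is_partition_def sorted_wrt_rev)
  ultimately have "rev xs = rev ys"
    by (metis mset_rev properties_for_sort sorted_sort_id)
  then show ?thesis
    by simp
qed

lemma pi_l_eqI:
  assumes p: "is_partition lam" and X: "Xset l a = beta_set (int l) lam"
  shows "pi_l l a = lam"
  unfolding pi_l_def
proof (rule the_equality)
  let ?B = "beta_set (int l) lam"
  have "count (mset lam) m = card {x \<in> Xset l a. gapcount l a x = m}" if m: "0 < m" for m
  proof -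
    have "beta (int l) lam ` {i. i < length lam \<and> lam ! i = m} = {x \<in> ?B. gaps_below ?B x = m}"
    proof (intro set_eqI iffI)
      fix x assume x: "x \<in> {x \<in> ?B. gaps_below ?B x = m}"
      then show "x \<in> beta (int l) lam ` {i. i < length lam \<and> lam ! i = m}"
      proof (cases rule: beta_set_cases[OF conjunct1[OF x[simplified]]])
        case 1
        then show ?thesis
          using x m gaps_below_beta_set_eq_0 by fastforce
      next
        case (2 i)
        then show ?thesis
          using x gaps_below_beta[OF p 2(1)] by auto
      qed
    next
      fix x assume "x \<in> beta (int l) lam ` {i. i < length lam \<and> lam ! i = m}"
      then obtain i where i: "i < length lam" "lam ! i = m" "x = beta (int l) lam i"
        by auto
      then have "x \<in> ?B"
        by (auto simp: beta_set_def)
      with i gaps_below_beta[OF p i(1)] show "x \<in> {x \<in> ?B. gaps_below ?B x = m}"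
        by simp
    qed
    moreover have "inj_on (beta (int l) lam) {i. i < length lam \<and> lam ! i = m}"
      using inj_on_beta[OF p] by (rule inj_on_subset) auto
    ultimately show ?thesis
      by (simp add: count_mset_eq_card gapcount_eq_gaps_below X card_image[symmetric])
  qed
  then show "is_partition lam \<and> (\<forall>n>0. count (mset lam) n = card {x \<in> Xset l a. gapcount l a x = n})"
    using p by simp
  then show "is_partition lam' \<and> (\<forall>n>0. count (mset lam') n = card {x \<in> Xset l a. gapcount l a x = n})
      \<Longrightarrow> lam' = lam" for lam'
    by (auto intro: is_partition_eqI)
qed

lemma card_beta_set_ge:
  assumes p: "is_partition lam" and K: "K \<le> c - int (length lam)"
  shows "finite (beta_set c lam \<inter> {K..})" "card (beta_set c lam \<inter> {K..}) = nat (c - K)"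
proof -
  let ?n = "length lam"
  have eq: "beta_set c lam \<inter> {K..} = beta c lam ` {..<?n} \<union> {K..c - int ?n - 1}"
  proof (intro set_eqI iffI)
    fix y assume "y \<in> beta c lam ` {..<?n} \<union> {K..c - int ?n - 1}"
    then show "y \<in> beta_set c lam \<inter> {K..}"
    proof
      assume "y \<in> beta c lam ` {..<?n}"
      then obtain k where "k < ?n" "y = beta c lam k"
        by auto
      with beta_lower[OF p this(1), of c] K show ?thesis
        by (auto simp: beta_set_def)
    qed (auto simp: beta_set_def)
  qed (auto simp: beta_set_def)
  have disj: "beta c lam ` {..<?n} \<inter> {K..c - int ?n - 1} = {}"
    using beta_lower[OF p, of _ c] by force
  show "finite (beta_set c lam \<inter> {K..})"
    unfolding eq by simp
  have "card (beta_set c lam \<inter> {K..}) = card (beta c lam ` {..<?n}) + card {K..c - int ?n - 1}"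
    unfolding eq using disj by (intro card_Un_disjoint) auto
  also have "card (beta c lam ` {..<?n}) = ?n"
    using card_image[OF inj_on_beta[OF p]] by simp
  finally show "card (beta_set c lam \<inter> {K..}) = nat (c - K)"
    using K by simp
qed

lemma card_Xset_ge:
  assumes l: "0 < l" and la: "length a = l" and m: "\<And>j. j < l \<Longrightarrow> m \<le> a ! j"
  shows "finite (Xset l a \<inter> {m * int l..})"
    "int (card (Xset l a \<inter> {m * int l..})) = sum_list a + int l * (1 - m)"
proof -
  define f where "f = (\<lambda>(j, R). R * int l + int j)"
  define A where "A = (SIGMA j:{..<l}. {m..a ! j})"
  have "Xset l a \<inter> {m * int l..} = f ` A"
  proof (intro set_eqI iffI)
    fix y assume y: "y \<in> Xset l a \<inter> {m * int l..}"
    define R where "R = y div int l"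
    define j where "j = nat (y mod int l)"
    have yy: "y = R * int l + int j" and jl: "j < l"
      using l by (simp_all add: R_def j_def nat_less_iff)
    have "m * int l div int l \<le> y div int l"
      using y l by (intro zdiv_mono1) auto
    then have "m \<le> R"
      using l by (simp add: R_def)
    moreover have "R \<le> a ! j"
      using y mem_Xset_iff[OF jl, of R a] yy by simp
    ultimately show "y \<in> f ` A"
      using jl yy unfolding A_def f_def by force
  next
    fix y assume "y \<in> f ` A"
    then obtain j R where jR: "j < l" "m \<le> R" "R \<le> a ! j" "y = R * int l + int j"
      unfolding A_def f_def by auto
    then have "m * int l \<le> y"
      using mult_right_mono[OF jR(2), of "int l"] by linarith
    with jR mem_Xset_iff[OF jR(1), of R a] show "y \<in> Xset l a \<inter> {m * int l..}"
      by simp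
  qed
  moreover have "inj_on f A"
  proof (rule inj_onI)
    fix x y assume "x \<in> A" "y \<in> A" "f x = f y"
    then obtain j R j' R' where "x = (j, R)" "y = (j', R')" "j < l" "j' < l"
      "R * int l + int j = R' * int l + int j'"
      unfolding A_def f_def by auto
    with linear_inj[of j l j' R R'] show "x = y"
      by simp
  qed
  ultimately have "card (Xset l a \<inter> {m * int l..}) = card A"
    by (simp add: card_image)
  also have "\<dots> = (\<Sum>j<l. card {m..a ! j})"
    unfolding A_def by (rule card_SigmaI) auto
  finally have "int (card (Xset l a \<inter> {m * int l..})) = (\<Sum>j<l. a ! j - m + 1)"
    using m by simp
  also have "\<dots> = (\<Sum>j<l. a ! j) + (\<Sum>j<l. 1 - m)"
    by (simp only: sum.distrib[symmetric]) (simp add: algebra_simps)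
  also have "\<dots> = sum_list a + int l * (1 - m)"
    using la by (simp add: sum_list_sum_nth atLeast0LessThan)
  finally show "int (card (Xset l a \<inter> {m * int l..})) = sum_list a + int l * (1 - m)" .
  show "finite (Xset l a \<inter> {m * int l..})"
    using \<open>Xset l a \<inter> {m * int l..} = f ` A\<close> by (simp add: A_def)
qed

lemma beta_set_Nil: "beta_set c [] = {..c - 1}"
  by (simp add: beta_set_def)

lemma beta_set_Cons: "beta_set c (h # lam) = insert (int h - 1 + c) (beta_set (c - 1) lam)"
proof -
  have "beta c (h # lam) ` {..<length (h # lam)} = insert (int h - 1 + c) (beta (c - 1) lam ` {..<length lam})"
    by (auto simp: lessThan_Suc_eq_insert_0 beta_def image_image)
  then show ?thesis
    by (auto simp: beta_set_def)
qed

lemma is_partition_Cons: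
  "is_partition (h # lam) \<longleftrightarrow> 0 < h \<and> (\<forall>x\<in>set lam. x \<le> h) \<and> is_partition lam"
  by (auto simp: is_partition_def)

lemma ex_beta_set:
  assumes "finite (S \<inter> {K..})" "\<And>y. y < K \<Longrightarrow> y \<in> S" "int (card (S \<inter> {K..})) = c - K"
  shows "\<exists>lam. is_partition lam \<and> S = beta_set c lam"
  using assms
proof (induction "card (S \<inter> {K..})" arbitrary: S c)
  case 0
  then have "S = {..c - 1}"
    by (auto simp: not_le)
  then show ?case
    by (intro exI[of _ "[]"]) (simp add: beta_set_Nil is_partition_def)
next
  case (Suc n)
  let ?T = "S \<inter> {K..}"
  define N where "N = Max ?T"
  have "?T \<noteq> {}"
    using Suc.hyps(2) by auto
  then have NT: "N \<in> ?T" and Nmax: "\<And>y. y \<in> ?T \<Longrightarrow> y \<le> N"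
    using Max_in[OF Suc.prems(1)] Max_ge[OF Suc.prems(1)] by (simp_all add: N_def)
  show ?case
  proof (cases "c \<le> N")
    case False
    have sub: "?T \<subseteq> {K..N}"
      using Nmax by auto
    then have "card ?T \<le> card {K..N}"
      by (intro card_mono) simp_all
    then have "int (card ?T) \<le> N - K + 1"
      using NT by (simp add: le_nat_iff)
    then have "N = c - 1"
      using False Suc.prems(3) by linarith
    then have "card ?T = card {K..N}"
      using Suc.prems(3) NT by simp
    then have "?T = {K..N}"
      using card_subset_eq[OF _ sub] by simp
    with Suc.prems(2) NT \<open>N = c - 1\<close> have "S = {..c - 1}"
      by (auto simp: not_le)
    then show ?thesis
      by (intro exI[of _ "[]"]) (simp add: beta_set_Nil is_partition_def)
  next
    case True
    \<comment> \<open>the largest element \<open>N\<close> of \<open>S\<close> is the first beta number, of the part \<open>N - c + 1\<close>\<close>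
    define S' where "S' = S - {N}"
    have T': "S' \<inter> {K..} = ?T - {N}"
      by (auto simp: S'_def)
    obtain lam where lam: "is_partition lam" "S' = beta_set (c - 1) lam"
      using Suc.hyps(1)[of S' "c - 1"] Suc.hyps(2) Suc.prems NT T' by (force simp: S'_def)
    define h where "h = nat (N - c + 1)"
    have "S = beta_set c (h # lam)"
      using True NT unfolding beta_set_Cons lam(2)[symmetric] by (auto simp: h_def S'_def)
    moreover have "x \<le> h" if x: "x \<in> set lam" for x
    proof -
      obtain k where k: "k < length lam" "x = lam ! k"
        using x by (auto simp: in_set_conv_nth)
      have "beta (c - 1) lam 0 \<in> S'"
        using k(1) by (auto simp: lam(2) beta_set_def)
      then have "beta (c - 1) lam 0 < N"
        using Nmax[of "beta (c - 1) lam 0"] NT by (cases "K \<le> beta (c - 1) lam 0") (auto simp: S'_def)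
      then show ?thesis
        using is_partition_nth_antimono[OF lam(1) _ k(1), of 0] k(2) True by (simp add: beta_def h_def)
    qed
    ultimately show ?thesis
      using lam(1) True by (intro exI[of _ "h # lam"]) (auto simp: is_partition_Cons h_def)
  qed
qed

lemma is_partition_pi_l_Xset:
  assumes l: "2 \<le> l" and a: "inLambda l a"
  shows "is_partition (pi_l l a)" "Xset l a = beta_set (int l) (pi_l l a)"
proof -
  have la: "length a = l" and sa: "sum_list a = 0"
    using a by (auto simp: inLambda_def)
  define m where "m = Min (set a)"
  have m: "m \<le> a ! j" if "j < l" for j
    using la that by (auto simp: m_def)
  have low: "y \<in> Xset l a" if "y < m * int l" for y
  proof -
    have "y div int l * int l + y mod int l = y" "0 \<le> y mod int l"
      using l by simp_all
    with that have "y div int l * int l < m * int l"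
      by linarith
    then have "y div int l < m"
      using l by simp
    moreover have "nat (y mod int l) < l"
      using l by (simp add: nat_less_iff)
    ultimately show ?thesis
      using mem_Xset_iff_div[of l y a] m l by fastforce
  qed
  obtain lam where lam: "is_partition lam" "Xset l a = beta_set (int l) lam"
    using ex_beta_set[OF card_Xset_ge(1)[of l a m] low] card_Xset_ge(2)[of l a m] l la m sa
    by (force simp: algebra_simps)
  moreover have "pi_l l a = lam"
    using pi_l_eqI[OF lam] .
  ultimately show "is_partition (pi_l l a)" "Xset l a = beta_set (int l) (pi_l l a)"
    by simp_all
qed

lemma pi_l_inj:
  assumes l: "2 \<le> l" and a: "inLambda l a" and b: "inLambda l b" and eq: "pi_l l a = pi_l l b"
  shows "a = b"
proof (rule nth_equalityI)
  have X: "Xset l a = Xset l b"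
    using is_partition_pi_l_Xset(2)[OF l a] is_partition_pi_l_Xset(2)[OF l b] eq by simp
  show "length a = length b"
    using a b by (simp add: inLambda_def)
  fix j assume "j < length a"
  then have j: "j < l"
    using a by (simp add: inLambda_def)
  show "a ! j = b ! j"
    using X mem_Xset_iff[OF j, of "a ! j" a] mem_Xset_iff[OF j, of "a ! j" b]
      mem_Xset_iff[OF j, of "b ! j" a] mem_Xset_iff[OF j, of "b ! j" b] by auto
qed

lemma pi_inv_pi_l:
  assumes "2 \<le> l" "inLambda l a"
  shows "pi_inv l (pi_l l a) = a"
  unfolding pi_inv_def by (rule the_equality) (use assms pi_l_inj in auto)

section \<open>Cores\<close>

lemma beta_above_gap:
  assumes p: "is_partition lam" and k: "k < length lam"
    and g: "g \<notin> beta_set c lam" "g < beta c lam k"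
  obtains j\<^sub>0 where "k < j\<^sub>0" "j\<^sub>0 \<le> length lam" "g < beta c lam (j\<^sub>0 - 1)"
    "\<And>j. j < length lam \<Longrightarrow> j\<^sub>0 \<le> j \<Longrightarrow> beta c lam j < g"
    "j\<^sub>0 < length lam \<Longrightarrow> beta c lam j\<^sub>0 < g"
proof -
  let ?n = "length lam"
  define P where "P j \<longleftrightarrow> k < j \<and> (j = ?n \<or> (j < ?n \<and> beta c lam j < g))" for j
  define j\<^sub>0 where "j\<^sub>0 = (LEAST j. P j)"
  have "P ?n"
    using k by (simp add: P_def)
  then have P: "P j\<^sub>0" and "j\<^sub>0 \<le> ?n"
    unfolding j\<^sub>0_def by (auto intro: LeastI Least_le)
  have above: "g < beta c lam j" if "k < j" "j < j\<^sub>0" for j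
  proof -
    have "\<not> P j"
      using that(2) unfolding j\<^sub>0_def by (rule not_less_Least)
    moreover have "beta c lam j \<noteq> g"
      using g(1) that \<open>j\<^sub>0 \<le> ?n\<close> by (auto simp: beta_set_def)
    ultimately show ?thesis
      using that \<open>j\<^sub>0 \<le> ?n\<close> by (auto simp: P_def)
  qed
  show ?thesis
  proof
    show "k < j\<^sub>0" "j\<^sub>0 \<le> ?n"
      using P \<open>j\<^sub>0 \<le> ?n\<close> by (simp_all add: P_def)
    show "g < beta c lam (j\<^sub>0 - 1)"
      using g(2) above[of "j\<^sub>0 - 1"] \<open>k < j\<^sub>0\<close> by (cases "j\<^sub>0 = Suc k") auto
    show below: "beta c lam j\<^sub>0 < g" if "j\<^sub>0 < ?n"
      using P that by (simp add: P_def)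
    show "beta c lam j < g" if "j < ?n" "j\<^sub>0 \<le> j" for j
      using below beta_strict_antimono[OF p, of j\<^sub>0 j c] that by (cases "j\<^sub>0 = j") auto
  qed
qed

lemma hook_eq_gap_distance:
  assumes p: "is_partition lam" and k: "k < length lam"
    and g: "g \<notin> beta_set c lam" "g < beta c lam k"
  obtains y where "1 \<le> y" "y \<le> lam ! k" "int (hook lam (Suc k) y) = beta c lam k - g"
proof -
  let ?n = "length lam"
  obtain j\<^sub>0 where j\<^sub>0: "k < j\<^sub>0" "j\<^sub>0 \<le> ?n" "g < beta c lam (j\<^sub>0 - 1)"
    "\<And>j. j < ?n \<Longrightarrow> j\<^sub>0 \<le> j \<Longrightarrow> beta c lam j < g" "j\<^sub>0 < ?n \<Longrightarrow> beta c lam j\<^sub>0 < g"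
    using beta_above_gap[OF assms] by blast
  define y where "y = nat (g - c + int j\<^sub>0 + 1)"
  have lam_nth: "int (lam ! j) = beta c lam j + int j + 1 - c" for j
    by (simp add: beta_def)
  have "1 \<le> g - c + int j\<^sub>0 + 1"
  proof (cases "j\<^sub>0 = ?n")
    case True
    with g(1) show ?thesis
      by (auto simp: beta_set_def)
  next
    case False
    with j\<^sub>0(2,5) beta_lower[OF p, of j\<^sub>0 c] show ?thesis
      by simp
  qed
  then have y: "int y = g - c + int j\<^sub>0 + 1" "1 \<le> y"
    by (simp_all add: y_def)
  have long: "y \<le> lam ! j" if "k \<le> j" "j < j\<^sub>0" for j
  proof -
    have "beta c lam (j\<^sub>0 - 1) + int (j\<^sub>0 - 1) \<le> beta c lam j + int j"
      using beta_add_antimono[OF p, of j "j\<^sub>0 - 1" c] j\<^sub>0(2) that by simp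
    moreover have "int (j\<^sub>0 - 1) = int j\<^sub>0 - 1"
      using that by simp
    ultimately have "int y \<le> int (lam ! j)"
      using j\<^sub>0(3) lam_nth[of j] y(1) by linarith
    then show ?thesis
      by simp
  qed
  have short: "lam ! j < y" if "j < ?n" "j\<^sub>0 \<le> j" for j
  proof -
    have "beta c lam j + int j \<le> beta c lam j\<^sub>0 + int j\<^sub>0"
      using beta_add_antimono[OF p that(2,1)] .
    with j\<^sub>0(5) that lam_nth[of j] y(1) show ?thesis
      by simp
  qed
  have "{x. Suc k < x \<and> x \<le> ?n \<and> y \<le> lam ! (x - 1)} = {Suc (Suc k)..j\<^sub>0}"
  proof (intro set_eqI iffI)
    fix x assume x: "x \<in> {x. Suc k < x \<and> x \<le> ?n \<and> y \<le> lam ! (x - 1)}"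
    then have "x - 1 < ?n" "y \<le> lam ! (x - 1)"
      by auto
    with short[of "x - 1"] have "x - 1 < j\<^sub>0"
      by fastforce
    with x show "x \<in> {Suc (Suc k)..j\<^sub>0}"
      by auto
  next
    fix x assume "x \<in> {Suc (Suc k)..j\<^sub>0}"
    with long[of "x - 1"] j\<^sub>0(2) show "x \<in> {x. Suc k < x \<and> x \<le> ?n \<and> y \<le> lam ! (x - 1)}"
      by auto
  qed
  then have "hook lam (Suc k) y = (lam ! k - y + 1) + (j\<^sub>0 - Suc k)"
    by (simp add: hook_def)
  moreover have "y \<le> lam ! k"
    using long j\<^sub>0(1) by simp
  ultimately have "int (hook lam (Suc k) y) = beta c lam k - g"
    using lam_nth[of k] y(1) j\<^sub>0(1) by simp
  with y(2) \<open>y \<le> lam ! k\<close> that show ?thesis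
    by blast
qed

text \<open>A gap at distance \<open>l\<close> below a beta number would give a hook of length \<open>l\<close>.\<close>

lemma beta_set_core_diff:
  assumes core: "is_core l lam" and z: "z \<in> beta_set (int l) lam"
  shows "z - int l \<in> beta_set (int l) lam"
proof (rule ccontr)
  assume gap: "z - int l \<notin> beta_set (int l) lam"
  have p: "is_partition lam"
    using core by (simp add: is_core_def)
  from z show False
  proof (cases rule: beta_set_cases)
    case 1
    with gap show False
      by (simp add: beta_set_def)
  next
    case (2 k)
    then have "0 < l"
      using gap z by (cases l) auto
    with hook_eq_gap_distance[OF p 2(1) gap[unfolded 2(2)]] obtain y
      where "1 \<le> y" "y \<le> lam ! k" "hook lam (Suc k) y = l"
      by auto
    with core 2(1) show False
      unfolding is_core_def by (metis Suc_leI diff_Suc_1 dvd_refl le_add1 plus_1_eq_Suc zero_less_Suc)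
  qed
qed

lemma ex_Xset_eq:
  assumes l: "0 < l" and closed: "\<And>z. z \<in> S \<Longrightarrow> z - int l \<in> S"
    and low: "\<And>y. y < K \<Longrightarrow> y \<in> S" and up: "\<And>y. y \<in> S \<Longrightarrow> y \<le> U"
  obtains a where "length a = l" "Xset l a = S"
proof -
  have closed_mult: "z - int d * int l \<in> S" if "z \<in> S" for z d
  proof (induction d)
    case (Suc d)
    then show ?case
      using closed[OF Suc.IH] by (simp add: algebra_simps)
  qed (use that in simp)
  define R\<^sub>0 where "R\<^sub>0 = - \<bar>K\<bar> - 1"
  define Rs where "Rs j = {R. R\<^sub>0 \<le> R \<and> R * int l + int j \<in> S}" for j
  have bound: "R \<le> \<bar>U\<bar>" if "R * int l + int j \<in> S" for R j
  proof -
    have "R * int l + int j \<le> U"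
      using up that by simp
    moreover have "R \<le> R * int l" if "0 \<le> R"
      using that l by (simp add: mult_le_cancel_left1)
    ultimately show ?thesis
      by (cases "0 \<le> R") auto
  qed
  have "Rs j \<subseteq> {R\<^sub>0..\<bar>U\<bar>}" for j
    using bound by (auto simp: Rs_def)
  then have fin: "finite (Rs j)" for j
    using finite_subset by blast
  have R\<^sub>0: "R\<^sub>0 \<in> Rs j" if "j < l" for j
  proof -
    have "R\<^sub>0 * int l + int j < R\<^sub>0 * int l + int l"
      using that by simp
    also have "\<dots> = - \<bar>K\<bar> * int l"
      by (simp add: R\<^sub>0_def algebra_simps)
    also have "\<dots> \<le> - \<bar>K\<bar>"
      using l by (simp add: mult_le_cancel_left1)
    finally show ?thesis
      using low by (simp add: Rs_def)
  qed
  define a where "a = map (\<lambda>j. Max (Rs j)) [0..<l]"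
  have a_mem: "a ! j \<in> Rs j" and a_ge: "\<And>R. R \<in> Rs j \<Longrightarrow> R \<le> a ! j" if "j < l" for j
    using that Max_in[OF fin] Max_ge[OF fin] R\<^sub>0[OF that] by (auto simp: a_def)
  have "y \<in> Xset l a \<longleftrightarrow> y \<in> S" for y
  proof -
    define R where "R = y div int l"
    define j where "j = nat (y mod int l)"
    have y: "y = R * int l + int j" and j: "j < l"
      using l by (simp_all add: R_def j_def nat_less_iff)
    show ?thesis
    proof
      assume "y \<in> Xset l a"
      then have "R \<le> a ! j"
        using mem_Xset_iff[OF j] y by simp
      moreover have "a ! j * int l + int j \<in> S"
        using a_mem[OF j] by (simp add: Rs_def)
      ultimately show "y \<in> S"
        using closed_mult[of _ "nat (a ! j - R)"] y by (force simp: algebra_simps)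
    next
      assume "y \<in> S"
      then have "R \<le> a ! j"
        using a_ge[OF j, of R] a_mem[OF j] y by (cases "R\<^sub>0 \<le> R") (auto simp: Rs_def)
      then show "y \<in> Xset l a"
        using mem_Xset_iff[OF j] y by simp
    qed
  qed
  then have "Xset l a = S"
    by blast
  moreover have "length a = l"
    by (simp add: a_def)
  ultimately show ?thesis
    using that by blast
qed

lemma pi_l_surj_core:
  assumes l: "2 \<le> l" and core: "is_core l lam"
  obtains a where "inLambda l a" "pi_l l a = lam"
proof -
  have p: "is_partition lam"
    using core by (simp add: is_core_def)
  let ?n = "length lam"
  have low: "y \<in> beta_set (int l) lam" if "y < int l - int ?n" for y
    using that by (simp add: beta_set_def)
  have up: "y \<le> int l + int (sum_list lam)" if "y \<in> beta_set (int l) lam" for y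
  proof (cases rule: beta_set_cases[OF that])
    case (2 k)
    then have "lam ! k \<le> sum_list lam"
      by (simp add: elem_le_sum_list)
    with 2 show ?thesis
      by (simp add: beta_def)
  qed simp
  obtain a where la: "length a = l" and X: "Xset l a = beta_set (int l) lam"
    using ex_Xset_eq[OF _ beta_set_core_diff[OF core] low up] l by auto
  define m where "m = min (Min (set a)) (- int ?n)"
  have m: "m \<le> a ! j" if "j < l" for j
    using that la by (auto simp: m_def min.coboundedI1)
  have "m * int l \<le> - int ?n * int l"
    by (rule mult_right_mono) (simp_all add: m_def)
  also have "\<dots> \<le> int l - int ?n"
  proof -
    have "int ?n \<le> int (l * ?n)"
      using l by (simp only: of_nat_le_iff) simp
    then show ?thesis
      by (simp add: algebra_simps)
  qed
  finally have "int (card (Xset l a \<inter> {m * int l..})) = int l - m * int l"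
    using card_beta_set_ge(2)[OF p] X by simp
  then have "sum_list a = 0"
    using card_Xset_ge(2)[of l a m] l la m by (simp add: algebra_simps)
  with la have "inLambda l a"
    by (simp add: inLambda_def)
  with that pi_l_eqI[OF p X] show ?thesis
    by blast
qed

section \<open>Descent and the length formula\<close>

lemma last_res_less: "0 < l \<Longrightarrow> last_res l lam < l"
  by (simp add: last_res_def residue_def nat_less_iff)

lemma residue_eq_beta_mod:
  "residue l (Suc k) (lam ! k) = nat (beta (int l) lam k mod int l)"
proof -
  have "beta (int l) lam k = (int (lam ! k) - int (Suc k)) + int l"
    by (simp add: beta_def)
  then show ?thesis
    by (simp add: residue_def)
qed

lemma last_beta_Xset:
  assumes l: "2 \<le> l" and a: "inLambda l a" and ne: "pi_l l a \<noteq> []"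
  obtains R where "R * int l + int (last_res l (pi_l l a)) \<in> Xset l a"
    "R * int l + int (last_res l (pi_l l a)) - 1 \<notin> Xset l a"
proof -
  let ?lam = "pi_l l a"
  let ?n = "length ?lam"
  have p: "is_partition ?lam" and X: "Xset l a = beta_set (int l) ?lam"
    using is_partition_pi_l_Xset[OF l a] by auto
  define x where "x = beta (int l) ?lam (?n - 1)"
  have "x \<in> Xset l a"
    using ne by (simp add: X beta_set_def x_def)
  moreover have "x - 1 \<notin> Xset l a"
  proof
    assume "x - 1 \<in> Xset l a"
    then have "x - 1 \<in> beta_set (int l) ?lam"
      by (simp add: X)
    then show False
    proof (cases rule: beta_set_cases)
      case 1
      moreover have "int (?n - 1) = int ?n - 1"
        using ne by (simp add: of_nat_diff Suc_le_eq)
      ultimately show False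
        using beta_lower[OF p, of "?n - 1" "int l"] ne by (simp add: x_def)
    next
      case (2 k)
      then have "k \<le> ?n - 1" "?n - 1 < ?n"
        using ne by auto
      from beta_add_antimono[OF p this, of "int l"] 2 show False
        by (simp add: x_def)
    qed
  qed
  moreover have "x = x div int l * int l + int (last_res l ?lam)"
    using residue_eq_beta_mod[of l "?n - 1" ?lam] ne l
    by (simp add: last_res_def last_conv_nth x_def)
  ultimately show ?thesis
    using that by (metis add_diff_eq)
qed

lemma separating_walls_descent:
  assumes l: "2 \<le> l" and a: "inLambda l a" and ne: "pi_l l a \<noteq> []"
  shows "separating_walls l (map of_int (sgen l (last_res l (pi_l l a)) a))
    = separating_walls l (map of_int a) - 1"
proof -
  define i where "i = last_res l (pi_l l a)"
  have i: "i < l"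
    using l by (simp add: i_def last_res_less)
  have la: "length a = l"
    using a by (simp add: inLambda_def)
  obtain R where in_X: "R * int l + int i \<in> Xset l a" and notin_X: "R * int l + int i - 1 \<notin> Xset l a"
    using last_beta_Xset[OF assms] by (auto simp: i_def)
  have R: "R \<le> a ! i"
    using in_X mem_Xset_iff[OF i] by simp
  let ?v = "map of_int a :: real list"
  have "separating_walls l (map of_int (sgen l i a)) = separating_walls l (sgen l i ?v)"
    using map_of_int_sgen[OF l i la, where 'a = real] by simp
  also have "\<dots> = separating_walls l ?v - 1"
  proof (cases "i = 0")
    case False
    have "R * int l + int i - 1 = R * int l + int (i - 1)"
      using False by simp
    then have "a ! (i - 1) < R"
      using notin_X mem_Xset_iff[of "i - 1" l R a] i by (metis less_imp_diff_less not_le)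
    have "separating_walls l (sgen l i ?v) = separating_walls l ?v
        - wall_count (of_int (a ! (i - 1) - a ! i)) + wall_count (of_int (a ! i - a ! (i - 1)))"
      using separating_walls_sgen_Suc[OF l _ i, of ?v] False la i by simp
    with R \<open>a ! (i - 1) < R\<close> show ?thesis
      by (simp only: wall_count_of_int) simp
  next
    case True
    have "R * int l + int i - 1 = (R - 1) * int l + int (l - 1)"
      using True l by (simp add: algebra_simps of_nat_diff)
    then have "a ! (l - 1) < R - 1"
      using notin_X mem_Xset_iff[of "l - 1" l "R - 1" a] l by (metis diff_less not_le zero_less_one order_less_le_trans zero_less_numeral)
    have "separating_walls l (sgen l 0 ?v) = separating_walls l ?v
        - wall_count (of_int (a ! 0 - a ! (l - 1))) + wall_count (of_int (a ! (l - 1) - a ! 0 + 2))"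
      using separating_walls_sgen_0[OF l, of ?v] la l by simp
    with R True \<open>a ! (l - 1) < R - 1\<close> show ?thesis
      by (simp only: wall_count_of_int) simp
  qed
  finally show ?thesis
    by (simp add: i_def)
qed

lemma Rlen_eq_gaps_below:
  assumes l: "2 \<le> l" and a: "inLambda l a" and i: "i < l"
  shows "Rlen l (pi_l l a) i = gaps_below (Xset l a) (a ! i * int l + int i)"
proof -
  let ?lam = "pi_l l a"
  let ?B = "beta_set (int l) ?lam"
  have p: "is_partition ?lam" and X: "Xset l a = ?B"
    using is_partition_pi_l_Xset[OF l a] by auto
  define T where "T = a ! i * int l + int i"
  define A where "A = {?lam ! (x - 1) | x. 1 \<le> x \<and> x \<le> length ?lam \<and> residue l x (?lam ! (x - 1)) = i}"
  have "finite A"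
    by (rule finite_subset[of _ "(\<lambda>x. ?lam ! (x - 1)) ` {1..length ?lam}"]) (auto simp: A_def)
  have residue_iff: "residue l (Suc k) (?lam ! k) = i \<longleftrightarrow> beta (int l) ?lam k mod int l = int i" for k
    using residue_eq_beta_mod[of l k ?lam] l by (simp add: nat_eq_iff)
  have "v \<le> gaps_below ?B T" if "v \<in> A" for v
  proof -
    obtain x where x: "1 \<le> x" "x \<le> length ?lam" "residue l x (?lam ! (x - 1)) = i" "v = ?lam ! (x - 1)"
      using \<open>v \<in> A\<close> unfolding A_def by blast
    define k where "k = x - 1"
    have k: "k < length ?lam" "residue l (Suc k) (?lam ! k) = i" "v = ?lam ! k"
      using x by (simp_all add: k_def)
    let ?R = "beta (int l) ?lam k div int l"
    have decomp: "beta (int l) ?lam k = ?R * int l + int i"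
      using residue_iff k(2) by (metis div_mult_mod_eq)
    have "beta (int l) ?lam k \<in> Xset l a"
      using k X by (auto simp: beta_set_def)
    then have "?R \<le> a ! i"
      using mem_Xset_iff[OF i] decomp by metis
    then have "beta (int l) ?lam k \<le> T"
      using decomp mult_right_mono[of ?R "a ! i" "int l"] by (simp add: T_def)
    then show ?thesis
      using gaps_below_beta_set_mono gaps_below_beta[OF p k(1)] k(3) by metis
  qed
  moreover have "gaps_below ?B T \<in> insert 0 A"
  proof -
    have "T \<in> ?B"
      using mem_Xset_iff[OF i, of "a ! i" a] X by (simp add: T_def)
    then show ?thesis
    proof (cases rule: beta_set_cases)
      case 1
      then show ?thesis
        using gaps_below_beta_set_eq_0 by simp
    next
      case (2 k)
      have "T mod int l = int i"
        using div_mod_linear(2)[of "int i" l "a ! i"] i by (simp add: T_def)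
      then have "residue l (Suc k) (?lam ! k) = i"
        using residue_iff 2 by simp
      with 2 gaps_below_beta[OF p 2(1)] show ?thesis
        unfolding A_def by (intro insertI2 CollectI exI[of _ "Suc k"]) auto
    qed
  qed
  ultimately have "Max (insert 0 A) = gaps_below ?B T"
    using \<open>finite A\<close> by (intro Max_eqI) auto
  then show ?thesis
    using X by (simp add: Rlen_def A_def T_def)
qed

lemma mult_less_iff_small:
  fixes D e :: int
  assumes "\<bar>e\<bar> < n"
  shows "D * n < e \<longleftrightarrow> D < 0 \<or> (D = 0 \<and> 0 < e)"
proof (cases D "0::int" rule: linorder_cases)
  case less
  then have "D * n \<le> - n"
    using mult_right_mono[of D "- 1" n] assms by simp
  with less assms show ?thesis
    by simp
next
  case greater
  then have "n \<le> D * n"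
    using mult_right_mono[of 1 D n] assms by simp
  with greater assms show ?thesis
    by simp
qed simp

lemma gaps_below_Xset:
  assumes l: "0 < l" and i: "i < l"
  shows "gaps_below (Xset l a) (a ! i * int l + int i)
    = (\<Sum>j<l. if j < i then nat (a ! i - a ! j) else nat (a ! i - a ! j - 1))"
proof -
  define T where "T = a ! i * int l + int i"
  define I where "I j = (if j < i then {a ! j + 1 .. a ! i} else {a ! j + 1 .. a ! i - 1})" for j
  define f where "f = (\<lambda>(j, R). R * int l + int j)"
  define A where "A = (SIGMA j:{..<l}. I j)"
  have below_T: "R * int l + int j < T \<longleftrightarrow> (if j < i then R \<le> a ! i else R \<le> a ! i - 1)"
    if "j < l" for R j
  proof -
    have "R * int l + int j < T \<longleftrightarrow> (R - a ! i) * int l < int i - int j"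
      by (simp add: T_def algebra_simps)
    also have "\<dots> \<longleftrightarrow> R - a ! i < 0 \<or> (R - a ! i = 0 \<and> 0 < int i - int j)"
      using that i by (intro mult_less_iff_small) auto
    finally show ?thesis
      by auto
  qed
  have "{y. y \<notin> Xset l a \<and> y < T} = f ` A"
  proof (intro set_eqI iffI)
    fix y assume y: "y \<in> {y. y \<notin> Xset l a \<and> y < T}"
    define R where "R = y div int l"
    define j where "j = nat (y mod int l)"
    have yy: "y = R * int l + int j" and j: "j < l"
      using l by (simp_all add: R_def j_def nat_less_iff)
    with y mem_Xset_iff[OF j, of R a] below_T[OF j, of R] have "R \<in> I j"
      by (auto simp: I_def split: if_splits)
    with j yy show "y \<in> f ` A"
      unfolding A_def f_def by force
  next
    fix y assume "y \<in> f ` A"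
    then obtain j R where j: "j < l" "R \<in> I j" "y = R * int l + int j"
      unfolding A_def f_def by auto
    with mem_Xset_iff[OF j(1), of R a] below_T[OF j(1), of R] show "y \<in> {y. y \<notin> Xset l a \<and> y < T}"
      by (auto simp: I_def split: if_splits)
  qed
  moreover have "inj_on f A"
  proof (rule inj_onI)
    fix x y assume "x \<in> A" "y \<in> A" "f x = f y"
    then obtain j R j' R' where "x = (j, R)" "y = (j', R')" "j < l" "j' < l"
      "R * int l + int j = R' * int l + int j'"
      unfolding A_def f_def by auto
    with linear_inj[of j l j' R R'] show "x = y"
      by simp
  qed
  ultimately have "gaps_below (Xset l a) T = card A"
    unfolding gaps_below_def by (simp add: card_image)
  also have "\<dots> = (\<Sum>j<l. card (I j))"
    unfolding A_def by (rule card_SigmaI) (auto simp: I_def)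
  also have "\<dots> = (\<Sum>j<l. if j < i then nat (a ! i - a ! j) else nat (a ! i - a ! j - 1))"
    by (intro sum.cong) (auto simp: I_def)
  finally show ?thesis
    by (simp add: T_def)
qed

lemma sum_square_split:
  fixes h :: "nat \<Rightarrow> nat \<Rightarrow> 'a::comm_monoid_add"
  shows "(\<Sum>i<l. \<Sum>j<l. h i j) = (\<Sum>(p, q)\<in>index_pairs l. h p q + h q p) + (\<Sum>i<l. h i i)"
proof -
  let ?P = "index_pairs l" and ?D = "(\<lambda>i. (i, i)) ` {..<l}"
  have U: "{..<l} \<times> {..<l} = (?P \<union> prod.swap ` ?P) \<union> ?D"
    by (auto simp: index_pairs_def image_iff)
  have "(\<Sum>i<l. \<Sum>j<l. h i j) = (\<Sum>x\<in>{..<l} \<times> {..<l}. case_prod h x)"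
    by (simp add: sum.cartesian_product)
  also have "\<dots> = (\<Sum>x\<in>?P \<union> prod.swap ` ?P. case_prod h x) + (\<Sum>x\<in>?D. case_prod h x)"
    unfolding U by (intro sum.union_disjoint finite_UnI finite_imageI finite_index_pairs finite_lessThan)
      (auto simp: index_pairs_def)
  also have "(\<Sum>x\<in>?P \<union> prod.swap ` ?P. case_prod h x)
      = (\<Sum>x\<in>?P. case_prod h x) + (\<Sum>x\<in>prod.swap ` ?P. case_prod h x)"
    by (intro sum.union_disjoint finite_imageI finite_index_pairs) (auto simp: index_pairs_def)
  also have "(\<Sum>x\<in>prod.swap ` ?P. case_prod h x) = (\<Sum>(p, q)\<in>?P. h q p)"
    by (subst sum.reindex) (auto simp: inj_on_def)
  also have "(\<Sum>x\<in>?D. case_prod h x) = (\<Sum>i<l. h i i)"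
    by (subst sum.reindex) (auto simp: inj_on_def)
  finally show ?thesis
    by (simp add: sum.distrib split_def)
qed

lemma sum_Rlen_eq_separating_walls:
  assumes l: "2 \<le> l" and a: "inLambda l a"
  shows "int (\<Sum>i<l. Rlen l (pi_l l a) i) = separating_walls l (map of_int a)"
proof -
  have la: "length a = l"
    using a by (simp add: inLambda_def)
  \<comment> \<open>\<open>h i j\<close> counts the gaps on runner \<open>j\<close> before the last bead of runner \<open>i\<close>\<close>
  define h where "h i j = (if j < i then nat (a ! i - a ! j) else nat (a ! i - a ! j - 1))" for i j
  have "(\<Sum>i<l. Rlen l (pi_l l a) i) = (\<Sum>i<l. \<Sum>j<l. h i j)"
    using l by (intro sum.cong) (auto simp: Rlen_eq_gaps_below[OF l a] gaps_below_Xset h_def)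
  also have "\<dots> = (\<Sum>(p, q)\<in>index_pairs l. h p q + h q p)"
    by (simp add: sum_square_split h_def)
  finally have "int (\<Sum>i<l. Rlen l (pi_l l a) i) = (\<Sum>(p, q)\<in>index_pairs l. int (h p q + h q p))"
    by (simp add: split_def)
  also have "\<dots> = separating_walls l (map of_int a)"
    unfolding separating_walls_def
  proof (intro sum.cong refl, clarify)
    fix p q assume "(p, q) \<in> index_pairs l"
    then have "p < q" "q < l"
      by (auto simp: index_pairs_def)
    moreover have "map of_int a ! p - map of_int a ! q = (of_int (a ! p - a ! q) :: real)"
      using la \<open>p < q\<close> \<open>q < l\<close> by simp
    then have "wall_count (map of_int a ! p - map of_int a ! q) = max (a ! p - a ! q - 1) (- (a ! p - a ! q))"
      by (simp only: wall_count_of_int)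
    ultimately show "int (h p q + h q p) = wall_count (map of_int a ! p - map of_int a ! q)"
      by (simp add: h_def max_def)
  qed
  finally show ?thesis .
qed

lemma Xset_replicate_0:
  assumes "0 < l"
  shows "Xset l (replicate l 0) = {..int l - 1}"
proof -
  have "y \<in> Xset l (replicate l 0) \<longleftrightarrow> y \<le> int l - 1" for y
  proof -
    have "nat (y mod int l) < l"
      using assms by (simp add: nat_less_iff)
    then have "y \<in> Xset l (replicate l 0) \<longleftrightarrow> y div int l \<le> 0"
      using mem_Xset_iff_div[OF assms] by simp
    also have "\<dots> \<longleftrightarrow> y \<le> int l - 1"
      using assms by (meson linorder_not_less pos_imp_zdiv_pos_iff of_nat_0_less_iff zle_diff1_eq)
    finally show ?thesis .
  qed
  then show ?thesis
    by blast
qed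

lemma pi_l_replicate_0: "0 < l \<Longrightarrow> pi_l l (replicate l 0) = []"
  by (rule pi_l_eqI) (simp_all add: Xset_replicate_0 beta_set_Nil is_partition_def)

lemma pi_l_eq_Nil_iff:
  assumes "2 \<le> l" "inLambda l a"
  shows "pi_l l a = [] \<longleftrightarrow> a = replicate l 0"
  using assms pi_l_inj[OF assms(1,2), of "replicate l 0"] pi_l_replicate_0[of l]
  by (auto simp: inLambda_def sum_list_replicate)

lemma ex_wrel_length_separating_walls:
  assumes l: "2 \<le> l"
  shows "inLambda l a \<Longrightarrow> separating_walls l (map of_int a) = int N \<Longrightarrow>
    \<exists>w. wrel l (pi_l l a) w \<and> is_word l w \<and> length w = N \<and> act l w (replicate l (0::real)) = map of_int a"
proof (induction N arbitrary: a)
  case 0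
  have "pi_l l a = []"
  proof (rule ccontr)
    assume "pi_l l a \<noteq> []"
    with separating_walls_descent[OF l 0(1)] 0(2) separating_walls_nonneg show False
      by (metis add.inverse_neutral diff_0 neg_0_le_iff_le not_one_le_zero of_nat_0)
  qed
  with pi_l_eq_Nil_iff[OF l 0(1)] show ?case
    by (intro exI[of _ "[]"]) (auto intro: wrel.empty simp: is_word_def)
next
  case (Suc N)
  have ne: "pi_l l a \<noteq> []"
    using pi_l_eq_Nil_iff[OF l Suc.prems(1)] Suc.prems(2) separating_walls_replicate_0 by fastforce
  define i where "i = last_res l (pi_l l a)"
  have i: "i < l"
    using l by (simp add: i_def last_res_less)
  have la: "length a = l"
    using Suc.prems(1) by (simp add: inLambda_def)
  have a': "inLambda l (sgen l i a)"
    using inLambda_sgen[OF l i Suc.prems(1)] .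
  have "separating_walls l (map of_int (sgen l i a)) = int N"
    using separating_walls_descent[OF l Suc.prems(1) ne] Suc.prems(2) by (simp add: i_def)
  then obtain w where w: "wrel l (pi_l l (sgen l i a)) w" "is_word l w" "length w = N"
    "act l w (replicate l (0::real)) = map of_int (sgen l i a)"
    using Suc.IH[OF a'] by blast
  have "score l i (pi_l l a) = pi_l l (sgen l i a)"
    by (simp add: score_def pi_inv_pi_l[OF l Suc.prems(1)])
  with ne w(1) have "wrel l (pi_l l a) (i # w)"
    by (auto intro: wrel.step simp: i_def)
  moreover have "act l (i # w) (replicate l (0::real)) = map of_int a"
    using w(4) map_of_int_sgen[OF l i la, where 'a = real] sgen_sgen[OF l i, of "map of_int a"] la by simp
  ultimately show ?case
    using w(2,3) i by (intro exI[of _ "i # w"]) (simp add: is_word_def)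
qed

section \<open>Minimal coset representatives\<close>

lemma separating_walls_le_coxlen:
  assumes "2 \<le> l" "is_word l w" "act l w (replicate l (0::real)) = map of_int a"
  shows "separating_walls l (map of_int a) \<le> int (coxlen l w)"
  using separating_walls_act_le_coxlen[OF assms(1,2), of "replicate l 0"] assms(3)
  by (simp add: inV_def sum_list_replicate separating_walls_replicate_0)

text \<open>The image of the alcove point attains the minimum in \<open>separating_walls_perturbed\<close>.\<close>

lemma act_order_if_coxlen_le:
  assumes l: "2 \<le> l" and w: "is_word l w" and la: "length a = l"
    and w0: "act l w (replicate l (0::real)) = map of_int a"
    and len: "int (coxlen l w) \<le> separating_walls l (map of_int a)"
  obtains \<sigma> where "bij_betw \<sigma> {..<l} {..<l}"
    "\<And>v k. length (v :: real list) = l \<Longrightarrow> k < l \<Longrightarrow> act l w v ! k = v ! \<sigma> k + of_int (a ! k)"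
    "\<And>p q. p < q \<Longrightarrow> q < l \<Longrightarrow> \<sigma> p < \<sigma> q \<longleftrightarrow> a ! p \<le> a ! q"
proof -
  obtain \<sigma> where bij: "bij_betw \<sigma> {..<l} {..<l}"
    and aff: "\<And>v k. length (v :: real list) = l \<Longrightarrow> k < l \<Longrightarrow> act l w v ! k = v ! \<sigma> k + act l w (replicate l (0::real)) ! k"
    using act_affine[OF w l] by blast
  have act: "act l w v ! k = v ! \<sigma> k + of_int (a ! k)" if "length (v :: real list) = l" "k < l" for v k
    using aff[OF that] w0 la that(2) by simp
  let ?x = "act l w (alcove_point l)"
  have x: "?x ! k = of_int (a ! k) + alcove_point l ! \<sigma> k" if "k < l" for k
    using act[OF _ that, of "alcove_point l"] by simp
  have "separating_walls l ?x \<le> int (coxlen l w)"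
    using separating_walls_act_le_coxlen[OF l w inV_alcove_point] separating_walls_alcove_point by simp
  with len separating_walls_perturbed(1)[OF la bij x] have "separating_walls l ?x = separating_walls l (map of_int a)"
    by linarith
  with separating_walls_perturbed(2)[OF la bij x] that bij act show ?thesis
    by blast
qed

lemma same_elem_if_coxlen_le:
  assumes l: "2 \<le> l" and a: "inLambda l a"
    and w: "is_word l w" "act l w (replicate l (0::real)) = map of_int a"
    and w': "is_word l w'" "act l w' (replicate l (0::real)) = map of_int a"
    and len: "int (coxlen l w) \<le> separating_walls l (map of_int a)"
      "int (coxlen l w') \<le> separating_walls l (map of_int a)"
  shows "same_elem l w w'"
proof -
  have la: "length a = l"
    using a by (simp add: inLambda_def)
  obtain \<sigma> where \<sigma>: "bij_betw \<sigma> {..<l} {..<l}"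
    "\<And>v k. length (v :: real list) = l \<Longrightarrow> k < l \<Longrightarrow> act l w v ! k = v ! \<sigma> k + of_int (a ! k)"
    "\<And>p q. p < q \<Longrightarrow> q < l \<Longrightarrow> \<sigma> p < \<sigma> q \<longleftrightarrow> a ! p \<le> a ! q"
    using act_order_if_coxlen_le[OF l w(1) la w(2) len(1)] by blast
  obtain \<sigma>' where \<sigma>': "bij_betw \<sigma>' {..<l} {..<l}"
    "\<And>v k. length (v :: real list) = l \<Longrightarrow> k < l \<Longrightarrow> act l w' v ! k = v ! \<sigma>' k + of_int (a ! k)"
    "\<And>p q. p < q \<Longrightarrow> q < l \<Longrightarrow> \<sigma>' p < \<sigma>' q \<longleftrightarrow> a ! p \<le> a ! q"
    using act_order_if_coxlen_le[OF l w'(1) la w'(2) len(2)] by blast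
  have "\<sigma> k = \<sigma>' k" if "k < l" for k
    using bij_betw_eq_if_same_order[OF \<sigma>(1) \<sigma>'(1) _ that] \<sigma>(3) \<sigma>'(3) by blast
  then show ?thesis
    unfolding same_elem_def inV_def using \<sigma>(2) \<sigma>'(2) by (auto intro!: nth_equalityI)
qed

theorem mainTheorem4:
  fixes l :: nat and lam :: "nat list"
  assumes "l \<ge> 2" and "is_core l lam"
  shows "\<exists>w. wrel l lam w \<and> reduced l w \<and> is_min_elem l lam w
           \<and> length w = (\<Sum>i<l. Rlen l lam i)"
proof -
  have l: "2 \<le> l"
    using assms(1) .
  obtain a where a: "inLambda l a" and lam: "pi_l l a = lam"
    using pi_l_surj_core[OF l assms(2)] by blast
  define N where "N = nat (separating_walls l (map of_int a))"
  have N: "separating_walls l (map of_int a) = int N"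
    using separating_walls_nonneg by (simp add: N_def)
  obtain w where wrel: "wrel l lam w" and w: "is_word l w" "length w = N"
    and w0: "act l w (replicate l (0::real)) = map of_int a"
    using ex_wrel_length_separating_walls[OF l a N] lam by blast
  have coset: "in_coset l lam w' \<longleftrightarrow> is_word l w' \<and> act l w' (replicate l (0::real)) = map of_int a" for w'
    using pi_inv_pi_l[OF l a] lam by (simp add: in_coset_def)
  have cox: "coxlen l w = N"
    using coxlen_le_length[OF w(1)] separating_walls_le_coxlen[OF l w(1) w0] w(2) N by simp
  have "is_min_elem l lam w"
    unfolding is_min_elem_def
  proof (intro conjI allI impI)
    show "in_coset l lam w"
      using coset w w0 by simp
    fix w' assume "in_coset l lam w' \<and> \<not> same_elem l w w'"
    with same_elem_if_coxlen_le[OF l a w(1) w0, of w'] coset cox N show "coxlen l w < coxlen l w'"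
      by fastforce
  qed
  moreover have "length w = (\<Sum>i<l. Rlen l lam i)"
    using sum_Rlen_eq_separating_walls[OF l a] N w(2) lam by (simp only: of_nat_eq_iff)
  ultimately show ?thesis
    using wrel w cox by (intro exI[of _ w]) (simp add: reduced_def)
qed

end
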